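(* Let $1<k<n$ and let $\psi:(\mathbb{Q}^{n+1})^*\to(\mathbb{Q}^{n+1})^*$ be the linear map with $\psi(x_i)=-x_{k-i}$ for $1\le i<k$, $\psi(x_k)=\sum_{j=1}^{n+1}x_j$, $\psi(x_i)=-x_{n+1-(i-k)}$ for $k<i\le n$, and $\psi(x_{n+1})=-x_{n+1}$. Then $\psi$ is a linear automorphism, the map $\ker\alpha\mapsto\ker\psi(\alpha)$ permutes the hyperplanes of $\mathcal{A}_{A_{n,k}}$, and $\psi\big(\sum_{j=1}^{n+1}x_j\big)=x_k$; in particular this permutation sends $\ker\big(\sum_{j=1}^{n+1}x_j\big)$ to $\ker x_k$.
   Context: For a finite simple graph $G=(N,E)$ with $N=\{1,\dots,n\}$ and $I\subseteq N$, $G[I]$ denotes the induced subgraph on $I$, and $H_I=\ker\big(\sum_{i\in I}x_i\big)$, where $x_1,\dots,x_n$ are the coordinate functions. The connected subgraph arrangement of $G$ is $\mathcal{A}_G=\{H_I:\emptyset\neq I\subseteq N,\ G[I]\text{ connected}\}$ over $\mathbb{Q}$. The almost path $A_{n,k}$ ($1<k<n$) has vertices $1,\dots,n+1$ and edges $\{i,i+1\}$ ($1\le i<n$) and $\{k,n+1\}$. *)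

theory Defs
  imports Complex_Main
begin

text \<open>Points of Q^(n+1): functions nat => rat supported on {1..n+1}.
  Linear forms on Q^(n+1) (elements of the dual space) are represented by their
  coefficient vectors w.r.t. the coordinate functions x_1,...,x_(n+1),
  again functions nat => rat supported on {1..n+1}.\<close>

definition vecs :: "nat \<Rightarrow> (nat \<Rightarrow> rat) set" where
  "vecs m = {v. \<forall>i. i \<notin> {1..m} \<longrightarrow> v i = 0}"

definition coord :: "nat \<Rightarrow> (nat \<Rightarrow> rat)" where
  "coord i = (\<lambda>j. if j = i then 1 else 0)"

definition sum_form :: "nat set \<Rightarrow> (nat \<Rightarrow> rat)" where
  "sum_form I = (\<lambda>j. if j \<in> I then 1 else 0)"

definition ker_form :: "nat \<Rightarrow> (nat \<Rightarrow> rat) \<Rightarrow> (nat \<Rightarrow> rat) set" where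
  "ker_form m a = {v \<in> vecs m. (\<Sum>i=1..m. a i * v i) = 0}"

definition induced_connected :: "nat set set \<Rightarrow> nat set \<Rightarrow> bool" where
  "induced_connected E I \<longleftrightarrow> I \<noteq> {} \<and>
     (\<forall>u\<in>I. \<forall>v\<in>I. (u, v) \<in> {(a, b). a \<in> I \<and> b \<in> I \<and> {a, b} \<in> E}\<^sup>*)"

definition csa :: "nat \<Rightarrow> nat set set \<Rightarrow> (nat \<Rightarrow> rat) set set" where
  "csa m E = {ker_form m (sum_form I) | I. I \<subseteq> {1..m} \<and> induced_connected E I}"

definition almost_path_edges :: "nat \<Rightarrow> nat \<Rightarrow> nat set set" where
  "almost_path_edges n k = {{i, i + 1} | i. 1 \<le> i \<and> i < n} \<union> {{k, n + 1}}"

definition psi_basis :: "nat \<Rightarrow> nat \<Rightarrow> nat \<Rightarrow> (nat \<Rightarrow> rat)" where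
  "psi_basis n k i =
     (if 1 \<le> i \<and> i < k then (\<lambda>j. - coord (k - i) j)
      else if i = k then sum_form {1..n+1}
      else if k < i \<and> i \<le> n then (\<lambda>j. - coord (n + 1 - (i - k)) j)
      else if i = n + 1 then (\<lambda>j. - coord (n + 1) j)
      else (\<lambda>j. 0))"

definition psi :: "nat \<Rightarrow> nat \<Rightarrow> (nat \<Rightarrow> rat) \<Rightarrow> (nat \<Rightarrow> rat)" where
  "psi n k a = (\<lambda>j. \<Sum>i=1..n+1. a i * psi_basis n k i j)"

end

theory Submission
  imports Defs
begin

text \<open>Writing \<open>m\<close> for the involution of \<open>{1..n+1} - {k}\<close> that reverses the two arms
  \<open>1..k-1\<close> and \<open>k+1..n\<close> of the almost path and fixes \<open>n+1\<close>, the map \<psi> sends \<open>x\<^sub>i\<close>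
  to \<open>-x\<^sub>m\<^sub>(\<^sub>i\<^sub>)\<close> for \<open>i \<noteq> k\<close>, so \<open>\<psi>(a)\<^sub>j = a\<^sub>k - a\<^sub>m\<^sub>(\<^sub>j\<^sub>)\<close> and \<psi> is an involution.
  Since \<open>m\<close> is a graph automorphism of \<open>A\<^sub>n\<^sub>,\<^sub>k - k\<close>, \<psi> sends the form of a connected set
  \<open>I\<close> with \<open>k \<notin> I\<close> to minus the form of the connected set \<open>m(I)\<close>. A connected set \<open>I \<ni> k\<close> is an
  interval around \<open>k\<close> on each arm (possibly with \<open>n+1\<close>), and \<psi> sends its form to the form of
  \<open>{k} \<union> m(complement of I)\<close>, which is again such a set. Hence \<open>ker \<alpha> \<mapsto> ker \<psi>(\<alpha>)\<close>
  is an involution of the arrangement.\<close>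

definition induced_adj :: "nat set set \<Rightarrow> nat set \<Rightarrow> (nat \<times> nat) set" where
  "induced_adj E I = {(a, b). a \<in> I \<and> b \<in> I \<and> {a, b} \<in> E}"

lemma induced_connected_iff:
  "induced_connected E I \<longleftrightarrow> I \<noteq> {} \<and> (\<forall>u\<in>I. \<forall>v\<in>I. (u, v) \<in> (induced_adj E I)\<^sup>*)"
  by (simp add: induced_connected_def induced_adj_def)

lemma induced_adj_converse: "(induced_adj E I)\<inverse> = induced_adj E I"
  by (auto simp: induced_adj_def insert_commute)

lemma induced_adj_rtrancl_sym:
  "(x, y) \<in> (induced_adj E I)\<^sup>* \<Longrightarrow> (y, x) \<in> (induced_adj E I)\<^sup>*"
  by (metis induced_adj_converse rtrancl_converseI)

lemma induced_connectedI_center: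
  assumes "c \<in> I" "\<And>u. u \<in> I \<Longrightarrow> (u, c) \<in> (induced_adj E I)\<^sup>*"
  shows "induced_connected E I"
  unfolding induced_connected_iff
  using assms induced_adj_rtrancl_sym by (metis empty_iff rtrancl_trans)

lemma induced_adj_rtrancl_invariant:
  assumes "(x, z) \<in> (induced_adj E I)\<^sup>*" "P x"
    and "\<And>a b. P a \<Longrightarrow> a \<in> I \<Longrightarrow> b \<in> I \<Longrightarrow> {a, b} \<in> E \<Longrightarrow> P b"
  shows "P z"
  using assms(1,2)
proof (induction rule: rtrancl_induct)
  case (step y z)
  then show ?case using assms(3) by (auto simp: induced_adj_def)
qed

lemma induced_connected_image:
  assumes "induced_connected E I"
    and "\<And>a b. a \<in> I \<Longrightarrow> b \<in> I \<Longrightarrow> {a, b} \<in> E \<Longrightarrow> {f a, f b} \<in> E'"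
  shows "induced_connected E' (f ` I)"
proof -
  have "(f x, f y) \<in> (induced_adj E' (f ` I))\<^sup>*" if "(x, y) \<in> (induced_adj E I)\<^sup>*" for x y
    using that
  proof (induction rule: rtrancl_induct)
    case (step y z)
    then have "(f y, f z) \<in> induced_adj E' (f ` I)"
      using assms(2) by (auto simp: induced_adj_def)
    with step.IH show ?case by (rule rtrancl_into_rtrancl)
  qed simp
  then show ?thesis using assms(1) unfolding induced_connected_iff by blast
qed

definition form_map :: "nat \<Rightarrow> (nat \<Rightarrow> nat \<Rightarrow> rat) \<Rightarrow> (nat \<Rightarrow> rat) \<Rightarrow> nat \<Rightarrow> rat" where
  "form_map m M a = (\<lambda>j. \<Sum>i=1..m. a i * M i j)"

definition dual_map :: "nat \<Rightarrow> (nat \<Rightarrow> nat \<Rightarrow> rat) \<Rightarrow> (nat \<Rightarrow> rat) \<Rightarrow> nat \<Rightarrow> rat" where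
  "dual_map m M v = (\<lambda>i. if i \<in> {1..m} then \<Sum>j=1..m. M i j * v j else 0)"

lemma ker_form_form_map:
  "ker_form m (form_map m M a) = vecs m \<inter> dual_map m M -` ker_form m a"
proof -
  have "(\<Sum>i=1..m. a i * dual_map m M v i) = (\<Sum>j=1..m. form_map m M a j * v j)" for v
  proof -
    have "(\<Sum>i=1..m. a i * dual_map m M v i) = (\<Sum>i=1..m. \<Sum>j=1..m. a i * M i j * v j)"
      by (simp add: dual_map_def sum_distrib_left mult.assoc)
    also have "\<dots> = (\<Sum>j=1..m. \<Sum>i=1..m. a i * M i j * v j)"
      by (rule sum.swap)
    also have "\<dots> = (\<Sum>j=1..m. form_map m M a j * v j)"
      by (simp add: form_map_def sum_distrib_right)
    finally show ?thesis .
  qed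
  moreover have "dual_map m M v \<in> vecs m" for v
    by (simp add: dual_map_def vecs_def)
  ultimately show ?thesis by (auto simp: ker_form_def)
qed

lemma ker_form_scale:
  assumes "c \<noteq> 0"
  shows "ker_form m (\<lambda>j. c * a j) = ker_form m a"
  using assms by (simp add: ker_form_def sum_distrib_left[symmetric] mult.assoc)

lemma sum_form_in_vecs: "I \<subseteq> {1..m} \<Longrightarrow> sum_form I \<in> vecs m"
  by (auto simp: sum_form_def vecs_def)

lemma almost_path_edges_iff:
  "{a, b} \<in> almost_path_edges n k \<longleftrightarrow>
     (1 \<le> a \<and> a < n \<and> b = a + 1) \<or> (1 \<le> b \<and> b < n \<and> a = b + 1) \<or> {a, b} = {k, n + 1}"
  unfolding almost_path_edges_def by (auto simp: doubleton_eq_iff)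

definition mirror :: "nat \<Rightarrow> nat \<Rightarrow> nat \<Rightarrow> nat" where
  "mirror n k j = (if j < k then k - j else if j \<le> n then n + 1 + k - j else n + 1)"

text \<open>Preimage under the transpose of \<psi>; it sends \<open>ker \<alpha>\<close> to \<open>ker \<psi>(\<alpha>)\<close> without having
  to choose a defining form of the hyperplane.\<close>
definition mirror_complement :: "nat \<Rightarrow> nat \<Rightarrow> nat set \<Rightarrow> nat set" where
  "mirror_complement n k I = {j \<in> {1..n+1}. j = k \<or> mirror n k j \<notin> I}"

definition psi_hyperplane :: "nat \<Rightarrow> nat \<Rightarrow> (nat \<Rightarrow> rat) set \<Rightarrow> (nat \<Rightarrow> rat) set" where
  "psi_hyperplane n k H = vecs (n+1) \<inter> dual_map (n+1) (psi_basis n k) -` H"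

lemma psi_hyperplane_ker_form:
  "psi_hyperplane n k (ker_form (n+1) a) = ker_form (n+1) (psi n k a)"
proof -
  have "psi n k = form_map (n+1) (psi_basis n k)"
    by (simp add: fun_eq_iff psi_def form_map_def)
  then show ?thesis by (simp add: psi_hyperplane_def ker_form_form_map)
qed

locale almost_path =
  fixes n k :: nat
  assumes one_less_k: "1 < k" and k_less_n: "k < n"
begin

abbreviation E :: "nat set set" where
  "E \<equiv> almost_path_edges n k"

lemma mirror_mem: "j \<in> {1..n+1} \<Longrightarrow> j \<noteq> k \<Longrightarrow> mirror n k j \<in> {1..n+1}"
  using one_less_k k_less_n by (auto simp: mirror_def)

lemma mirror_neq: "j \<in> {1..n+1} \<Longrightarrow> j \<noteq> k \<Longrightarrow> mirror n k j \<noteq> k"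
  using one_less_k k_less_n by (auto simp: mirror_def)

lemma mirror_mirror: "j \<in> {1..n+1} \<Longrightarrow> j \<noteq> k \<Longrightarrow> mirror n k (mirror n k j) = j"
  using one_less_k k_less_n by (auto simp: mirror_def)

lemma mirror_edge:
  assumes "y \<noteq> k" "z \<noteq> k" "{y, z} \<in> E"
  shows "{mirror n k y, mirror n k z} \<in> E"
proof -
  have "mirror n k y = mirror n k (y + 1) + 1 \<and> 1 \<le> mirror n k (y + 1) \<and> mirror n k (y + 1) < n"
    if "1 \<le> y" "y < n" "y \<noteq> k" "y + 1 \<noteq> k" for y
    using that one_less_k k_less_n by (auto simp: mirror_def)
  with assms show ?thesis
    unfolding almost_path_edges_iff doubleton_eq_iff by auto
qed

lemma psi_basis_eq:
  "psi_basis n k i j = (if i = k \<and> j \<in> {1..n+1} then 1 else 0)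
     - (if j \<in> {1..n+1} - {k} \<and> i = mirror n k j then 1 else 0)"
  using one_less_k k_less_n by (auto simp: psi_basis_def mirror_def coord_def sum_form_def)

lemma psi_apply:
  "psi n k a j = (if j \<in> {1..n+1} then a k - (if j \<noteq> k then a (mirror n k j) else 0) else 0)"
  using one_less_k k_less_n mirror_mem[of j]
  by (auto simp: psi_def psi_basis_eq right_diff_distrib sum_subtractf if_distrib[of "(*) _"]
      cong: if_cong)

lemma psi_in_vecs: "psi n k a \<in> vecs (n+1)"
  by (simp add: vecs_def psi_apply)

lemma psi_linear: "psi n k (\<lambda>j. r * a j + s * b j) = (\<lambda>j. r * psi n k a j + s * psi n k b j)"
  by (simp add: fun_eq_iff psi_apply algebra_simps)

lemma psi_psi:
  assumes "a \<in> vecs (n+1)"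
  shows "psi n k (psi n k a) = a"
proof
  fix j
  have "k \<in> {1..n+1}" using one_less_k k_less_n by simp
  then show "psi n k (psi n k a) j = a j"
    using assms mirror_mem[of j] mirror_neq[of j] mirror_mirror[of j]
    by (auto simp: psi_apply vecs_def)
qed

lemma bij_betw_psi: "bij_betw (psi n k) (vecs (n+1)) (vecs (n+1))"
  using psi_psi psi_in_vecs by (intro bij_betw_byWitness[where f' = "psi n k"]) auto

lemma psi_sum_form_all: "psi n k (sum_form {1..n+1}) = coord k"
proof
  fix j
  show "psi n k (sum_form {1..n+1}) j = coord k j"
    using mirror_mem[of j] one_less_k k_less_n by (auto simp: psi_apply sum_form_def coord_def)
qed

lemma psi_sum_form:
  "psi n k (sum_form I) j = (if j \<in> {1..n+1}
     then (if k \<in> I then 1 else 0) - (if j \<noteq> k \<and> mirror n k j \<in> I then 1 else 0) else 0)"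
  by (simp add: psi_apply sum_form_def)

lemma connected_mirror_image:
  assumes "k \<notin> I" "induced_connected E I"
  shows "induced_connected E (mirror n k ` I)"
proof (rule induced_connected_image[OF assms(2)])
  fix a b assume "a \<in> I" "b \<in> I" "{a, b} \<in> E"
  with assms(1) show "{mirror n k a, mirror n k b} \<in> E" by (intro mirror_edge) auto
qed

lemma connected_contains_below:
  assumes "k \<in> I" "induced_connected E I" "x \<in> I" "x \<le> y" "y \<le> k"
  shows "y \<in> I"
proof (rule ccontr)
  assume y: "y \<notin> I"
  with assms have "x < y" "y < k" by (auto simp: le_less)
  have "(x, k) \<in> (induced_adj E I)\<^sup>*"
    using assms(1-3) by (auto simp: induced_connected_iff)
  then have "k < y"
  proof (rule induced_adj_rtrancl_invariant[where P = "\<lambda>z. z < y"])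
    fix a b assume "a < y" "b \<in> I" "{a, b} \<in> E"
    moreover from y \<open>b \<in> I\<close> have "b \<noteq> y" by blast
    ultimately show "b < y" using \<open>y < k\<close> k_less_n
      unfolding almost_path_edges_iff doubleton_eq_iff by auto
  qed fact
  with \<open>y < k\<close> show False by simp
qed

lemma connected_contains_above:
  assumes "k \<in> I" "induced_connected E I" "x \<in> I" "x \<le> n" "k \<le> y" "y \<le> x"
  shows "y \<in> I"
proof (rule ccontr)
  assume y: "y \<notin> I"
  with assms have "k < y" "y < x" by (auto simp: le_less)
  have "(x, k) \<in> (induced_adj E I)\<^sup>*"
    using assms(1-3) by (auto simp: induced_connected_iff)
  then have "y < k \<and> k \<le> n"
  proof (rule induced_adj_rtrancl_invariant[where P = "\<lambda>z. y < z \<and> z \<le> n"])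
    fix a b assume "y < a \<and> a \<le> n" "b \<in> I" "{a, b} \<in> E"
    moreover from y \<open>b \<in> I\<close> have "b \<noteq> y" by blast
    ultimately show "y < b \<and> b \<le> n" using \<open>k < y\<close>
      unfolding almost_path_edges_iff doubleton_eq_iff by auto
  qed (use \<open>y < x\<close> assms(4) in simp)
  with \<open>k < y\<close> show False by simp
qed

lemma interval_reaches:
  assumes "a \<le> b" "1 \<le> a" "b \<le> n" "{a..b} \<subseteq> J"
  shows "(a, b) \<in> (induced_adj E J)\<^sup>*"
  using assms(1)
proof (induction b rule: dec_induct)
  case (step m)
  then have "(m, Suc m) \<in> induced_adj E J"
    using assms(2-4) unfolding induced_adj_def almost_path_edges_iff by auto
  with step.IH show ?case by (rule rtrancl_into_rtrancl)
qed simp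

lemma mirror_complement_below:
  assumes "k \<in> I" "induced_connected E I" "u \<in> mirror_complement n k I" "u \<le> y" "y \<le> k"
  shows "y \<in> mirror_complement n k I"
proof (cases "y = k")
  case False
  then have "mirror n k u \<notin> I" using assms(3-5) by (auto simp: mirror_complement_def)
  moreover have "mirror n k u = k - u" "mirror n k y = k - y"
    using assms(4,5) False by (auto simp: mirror_def)
  moreover have "k - y \<le> k - u" "k - u \<le> k"
    using assms(4) by linarith+
  ultimately have "mirror n k y \<notin> I"
    using connected_contains_below[OF assms(1,2)] by metis
  then show ?thesis using assms(3-5) k_less_n by (simp add: mirror_complement_def)
qed (use k_less_n one_less_k in \<open>simp add: mirror_complement_def\<close>)

lemma mirror_complement_above:
  assumes "k \<in> I" "induced_connected E I" "u \<in> mirror_complement n k I" "u \<le> n" "k \<le> y" "y \<le> u"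
  shows "y \<in> mirror_complement n k I"
proof (cases "y = k")
  case False
  then have "mirror n k u \<notin> I" using assms(3-6) by (auto simp: mirror_complement_def)
  moreover have "mirror n k u = n + 1 + k - u" "mirror n k y = n + 1 + k - y"
    using assms(4-6) False by (auto simp: mirror_def)
  moreover have "n + 1 + k - y \<le> n" "k \<le> n + 1 + k - u" "n + 1 + k - u \<le> n + 1 + k - y"
    using assms(4-6) False by linarith+
  ultimately have "mirror n k y \<notin> I"
    using connected_contains_above[OF assms(1,2)] by metis
  then show ?thesis using assms(4-6) one_less_k by (simp add: mirror_complement_def)
qed (use k_less_n one_less_k in \<open>simp add: mirror_complement_def\<close>)

lemma connected_mirror_complement:
  assumes "k \<in> I" "induced_connected E I"
  shows "induced_connected E (mirror_complement n k I)"
proof (rule induced_connectedI_center)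
  show k: "k \<in> mirror_complement n k I"
    using one_less_k k_less_n by (simp add: mirror_complement_def)
  fix u assume u: "u \<in> mirror_complement n k I"
  consider "u \<le> k" | "k < u" "u \<le> n" | "u = n + 1"
    using u by (fastforce simp: mirror_complement_def)
  then show "(u, k) \<in> (induced_adj E (mirror_complement n k I))\<^sup>*"
  proof cases
    case 1
    have "{u..k} \<subseteq> mirror_complement n k I"
      using mirror_complement_below[OF assms u] by auto
    then show ?thesis using interval_reaches 1 u k_less_n by (simp add: mirror_complement_def)
  next
    case 2
    have "{k..u} \<subseteq> mirror_complement n k I"
      using mirror_complement_above[OF assms u] 2 by auto
    then show ?thesis using interval_reaches 2 one_less_k induced_adj_rtrancl_sym by simp
  next
    case 3
    then have "(u, k) \<in> induced_adj E (mirror_complement n k I)"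
      using u k unfolding induced_adj_def almost_path_edges_iff by auto
    then show ?thesis by blast
  qed
qed

lemma mirror_image_eq:
  assumes "I \<subseteq> {1..n+1} - {k}"
  shows "mirror n k ` I = {j \<in> {1..n+1}. j \<noteq> k \<and> mirror n k j \<in> I}"
proof (intro equalityI subsetI)
  fix j assume "j \<in> mirror n k ` I"
  then obtain i where i: "i \<in> I" "j = mirror n k i" by blast
  then have "i \<in> {1..n+1}" "i \<noteq> k" using assms by auto
  with i show "j \<in> {j \<in> {1..n+1}. j \<noteq> k \<and> mirror n k j \<in> I}"
    using mirror_mem mirror_neq mirror_mirror by simp
next
  fix j assume "j \<in> {j \<in> {1..n+1}. j \<noteq> k \<and> mirror n k j \<in> I}"
  then show "j \<in> mirror n k ` I" using mirror_mirror by (metis (mono_tags) image_eqI mem_Collect_eq)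
qed

lemma psi_sum_form_connected:
  assumes "I \<subseteq> {1..n+1}" "induced_connected E I"
  obtains J c where "J \<subseteq> {1..n+1}" "induced_connected E J" "c \<noteq> 0"
    "psi n k (sum_form I) = (\<lambda>j. c * sum_form J j)"
proof (cases "k \<in> I")
  case True
  have "psi n k (sum_form I) = (\<lambda>j. 1 * sum_form (mirror_complement n k I) j)"
    unfolding fun_eq_iff psi_sum_form using True by (auto simp: sum_form_def mirror_complement_def)
  with connected_mirror_complement[OF True assms(2)] show ?thesis
    by (intro that[of _ 1]) (auto simp: mirror_complement_def)
next
  case False
  then have I: "I \<subseteq> {1..n+1} - {k}" using assms(1) by blast
  then have "psi n k (sum_form I) = (\<lambda>j. -1 * sum_form (mirror n k ` I) j)"
    unfolding fun_eq_iff psi_sum_form mirror_image_eq[OF I] using False by (auto simp: sum_form_def)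
  with connected_mirror_image[OF False assms(2)] show ?thesis
    by (intro that[of _ "-1"]) (auto simp: mirror_image_eq[OF I])
qed

lemma psi_hyperplane_in_csa:
  assumes "H \<in> csa (n+1) E"
  shows "psi_hyperplane n k H \<in> csa (n+1) E"
proof -
  obtain I where I: "I \<subseteq> {1..n+1}" "induced_connected E I" "H = ker_form (n+1) (sum_form I)"
    using assms by (auto simp: csa_def)
  obtain J c where J: "J \<subseteq> {1..n+1}" "induced_connected E J" "c \<noteq> 0"
      "psi n k (sum_form I) = (\<lambda>j. c * sum_form J j)"
    using psi_sum_form_connected[OF I(1,2)] .
  have "psi_hyperplane n k H = ker_form (n+1) (sum_form J)"
    unfolding I(3) psi_hyperplane_ker_form J(4) using J(3) by (rule ker_form_scale)
  with J(1,2) show ?thesis by (auto simp: csa_def)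
qed

lemma psi_hyperplane_involutive:
  assumes "a \<in> vecs (n+1)"
  shows "psi_hyperplane n k (psi_hyperplane n k (ker_form (n+1) a)) = ker_form (n+1) a"
  unfolding psi_hyperplane_ker_form psi_psi[OF assms] ..

lemma bij_betw_psi_hyperplane: "bij_betw (psi_hyperplane n k) (csa (n+1) E) (csa (n+1) E)"
proof -
  have "\<forall>H\<in>csa (n+1) E. psi_hyperplane n k (psi_hyperplane n k H) = H"
    using psi_hyperplane_involutive sum_form_in_vecs by (auto simp: csa_def)
  then show ?thesis
    using psi_hyperplane_in_csa by (intro bij_betw_byWitness[where f' = "psi_hyperplane n k"]) auto
qed

end

theorem proposition5p3:
  fixes n k :: nat
  assumes "1 < k" and "k < n"
  shows "(\<forall>a\<in>vecs (n+1). \<forall>b\<in>vecs (n+1). \<forall>r s :: rat.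
            psi n k (\<lambda>j. r * a j + s * b j) = (\<lambda>j. r * psi n k a j + s * psi n k b j))
       \<and> bij_betw (psi n k) (vecs (n+1)) (vecs (n+1))
       \<and> (\<exists>\<sigma>. bij_betw \<sigma> (csa (n+1) (almost_path_edges n k)) (csa (n+1) (almost_path_edges n k))
              \<and> (\<forall>a\<in>vecs (n+1). a \<noteq> (\<lambda>j. 0) \<longrightarrow>
                   ker_form (n+1) a \<in> csa (n+1) (almost_path_edges n k) \<longrightarrow>
                   \<sigma> (ker_form (n+1) a) = ker_form (n+1) (psi n k a))
              \<and> \<sigma> (ker_form (n+1) (sum_form {1..n+1})) = ker_form (n+1) (coord k))
       \<and> psi n k (sum_form {1..n+1}) = coord k"
proof -
  interpret almost_path n k using assms by unfold_locales
  have all_to_coord: "psi_hyperplane n k (ker_form (n+1) (sum_form {1..n+1})) = ker_form (n+1) (coord k)"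
    unfolding psi_hyperplane_ker_form psi_sum_form_all ..
  show ?thesis
    by (intro conjI ballI allI impI exI[of _ "psi_hyperplane n k"])
      (rule psi_linear bij_betw_psi bij_betw_psi_hyperplane psi_hyperplane_ker_form psi_sum_form_all
        all_to_coord)+
qed

end
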